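(* Let $\mathbb{K}$ be an algebraically closed field of characteristic zero, $\mathcal{C}\subset\mathbb{K}^2$ an affine irreducible plane curve, $A=(a,b)\in\mathbb{K}^2$, $d\in\mathbb{K}\setminus\{0\}$, and assume that $\mathcal{C}_0\neq\emptyset$ and that $\mathcal{C}$ is not a circle centered at $A$. If $\mathcal{C}$ is not a line passing through $A$, then $\mathfrak{C}(\mathcal{C},A,d)$ has at least one simple component.
   Context: For $\mathcal{C}$ defined by an irreducible polynomial $f(y_1,y_2)$: $\mathfrak{B}(\mathcal{C},A,d)\subset\mathbb{K}^2\times\mathbb{K}^2\times\mathbb{K}$ is the set of $(\bar x,\bar y,w)$ with $f(y_1,y_2)=0$, $(x_1-y_1)^2+(x_2-y_2)^2=d^2$, $(y_2-b)(x_1-y_1)-(y_1-a)(x_2-y_2)=0$, $w((y_1-a)^2+(y_2-b)^2)=1$; $\pi_1,\pi_2$ are the projections $(\bar x,\bar y,w)\mapsto\bar x$, $\mapsto\bar y$; the conchoid $\mathfrak{C}(\mathcal{C},A,d)$ is the Zariski closure of $\pi_1(\mathfrak{B}(\mathcal{C},A,d))$. $\mathcal{C}_0=\{(p_1,p_2)\in\mathcal{C}:(p_1-a)^2+(p_2-b)^2\neq0\}$. An irreducible component $\mathcal{M}$ of $\mathfrak{C}(\mathcal{C},A,d)$ is simple if there is a non-empty Zariski dense $\Omega\subset\mathcal{M}$ with $\mathrm{Card}(\pi_2(\pi_1^{-1}(Q)))=1$ for all $Q\in\Omega$; otherwise special. A circle centered at $A$ of radius $r$ is $(y_1-a)^2+(y_2-b)^2=r^2$.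 *)

theory Defs
  imports "HOL-Computational_Algebra.Polynomial"
begin

text \<open>Bivariate polynomials over K are represented as elements of K[y1][y2],
  i.e. type 'a poly poly: the outer variable is y2, coefficients are polynomials in y1.\<close>

definition eval2 :: "'a::comm_semiring_1 poly poly \<Rightarrow> 'a \<times> 'a \<Rightarrow> 'a" where
  "eval2 f p = poly (map_poly (\<lambda>c. poly c (fst p)) f) (snd p)"

definition zariski_closed2 :: "('a::comm_semiring_1 \<times> 'a) set \<Rightarrow> bool" where
  "zariski_closed2 S \<longleftrightarrow> (\<exists>F. S = {p. \<forall>g\<in>F. eval2 g p = 0})"

definition zariski_closure2 :: "('a::comm_semiring_1 \<times> 'a) set \<Rightarrow> ('a \<times> 'a) set" where
  "zariski_closure2 S = \<Inter>{T. zariski_closed2 T \<and> S \<subseteq> T}"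

definition zariski_irreducible2 :: "('a::comm_semiring_1 \<times> 'a) set \<Rightarrow> bool" where
  "zariski_irreducible2 S \<longleftrightarrow> zariski_closed2 S \<and> S \<noteq> {} \<and>
     (\<forall>S1 S2. zariski_closed2 S1 \<and> zariski_closed2 S2 \<and> S = S1 \<union> S2 \<longrightarrow> S = S1 \<or> S = S2)"

definition irreducible_component2 :: "('a::comm_semiring_1 \<times> 'a) set \<Rightarrow> ('a \<times> 'a) set \<Rightarrow> bool" where
  "irreducible_component2 M X \<longleftrightarrow> M \<subseteq> X \<and> zariski_irreducible2 M \<and>
     (\<forall>N. zariski_irreducible2 N \<and> M \<subseteq> N \<and> N \<subseteq> X \<longrightarrow> N = M)"

definition curve :: "'a::comm_semiring_1 poly poly \<Rightarrow> ('a \<times> 'a) set" where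
  "curve f = {p. eval2 f p = 0}"

definition curve0 :: "'a::comm_ring_1 poly poly \<Rightarrow> 'a \<times> 'a \<Rightarrow> ('a \<times> 'a) set" where
  "curve0 f A = {p \<in> curve f. (fst p - fst A)^2 + (snd p - snd A)^2 \<noteq> 0}"

definition conchoid_B :: "'a::field poly poly \<Rightarrow> 'a \<times> 'a \<Rightarrow> 'a \<Rightarrow> (('a \<times> 'a) \<times> ('a \<times> 'a) \<times> 'a) set" where
  "conchoid_B f A d = {((x1,x2),(y1,y2),w). eval2 f (y1,y2) = 0 \<and>
       (x1 - y1)^2 + (x2 - y2)^2 = d^2 \<and>
       (y2 - snd A) * (x1 - y1) - (y1 - fst A) * (x2 - y2) = 0 \<and>
       w * ((y1 - fst A)^2 + (y2 - snd A)^2) = 1}"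

definition pi1 :: "('a \<times> 'a) \<times> ('a \<times> 'a) \<times> 'a \<Rightarrow> 'a \<times> 'a" where
  "pi1 t = fst t"

definition pi2 :: "('a \<times> 'a) \<times> ('a \<times> 'a) \<times> 'a \<Rightarrow> 'a \<times> 'a" where
  "pi2 t = fst (snd t)"

definition conchoid :: "'a::field poly poly \<Rightarrow> 'a \<times> 'a \<Rightarrow> 'a \<Rightarrow> ('a \<times> 'a) set" where
  "conchoid f A d = zariski_closure2 (pi1 ` conchoid_B f A d)"

definition simple_component :: "'a::field poly poly \<Rightarrow> 'a \<times> 'a \<Rightarrow> 'a \<Rightarrow> ('a \<times> 'a) set \<Rightarrow> bool" where
  "simple_component f A d M \<longleftrightarrow> irreducible_component2 M (conchoid f A d) \<and>
     (\<exists>\<Omega>. \<Omega> \<noteq> {} \<and> \<Omega> \<subseteq> M \<and> zariski_closure2 \<Omega> = M \<and>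
        (\<forall>Q\<in>\<Omega>. card (pi2 ` (pi1 -` {Q} \<inter> conchoid_B f A d)) = 1))"

definition circle_centered :: "'a::comm_ring_1 \<times> 'a \<Rightarrow> 'a \<Rightarrow> ('a \<times> 'a) set" where
  "circle_centered A r = {(y1,y2). (y1 - fst A)^2 + (y2 - snd A)^2 = r^2}"

definition line_through :: "'a::comm_ring_1 \<times> 'a \<Rightarrow> 'a \<Rightarrow> 'a \<Rightarrow> ('a \<times> 'a) set" where
  "line_through A \<alpha> \<beta> = {(y1,y2). \<alpha> * (y1 - fst A) + \<beta> * (y2 - snd A) = 0}"

end

theory Submission
  imports Defs
begin

text \<open>Above a point \<open>Q\<close> of the conchoid with \<open>|QA|\<^sup>2 \<noteq> 0\<close> the possible feet on the curve are
  \<open>Q + c (A - Q)\<close> with \<open>c\<^sup>2 |QA|\<^sup>2 = d\<^sup>2\<close>, i.e. two values \<open>\<pm>c\<close>. Eliminating \<open>c\<^sup>2\<close> and clearing a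
  power of \<open>|QA|\<^sup>2\<close> gives \<open>f(Q + c (A - Q)) = a(Q) + c b(Q)\<close> with polynomials \<open>a\<close>, \<open>b\<close>. So the
  conchoid lies in the zero set of \<open>|QA|\<^sup>2 (|QA|\<^sup>2 a\<^sup>2 - d\<^sup>2 b\<^sup>2)\<close>, and wherever \<open>a(Q) \<noteq> 0\<close> exactly one
  of the two candidates lies on the curve: the fibre is a point.
  It remains to find one point of the conchoid with \<open>a(Q) \<noteq> 0\<close>, i.e. with exactly one foot on
  the curve. If there were none, starting from a point of \<open>C\<^sub>0\<close> the swap \<open>c \<mapsto> -c\<close> would
  produce points of the curve on a line through \<open>A\<close> in steps of \<open>2d\<close>, infinitely many in
  characteristic zero, and the irreducible curve would be that line. The irreducible component
  through such a point is simple, with \<open>\<Omega>\<close> the complement of a proper closed subset.\<close>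

lemma eval2_pCons: "eval2 (pCons c f) p = poly c (fst p) + snd p * eval2 f p"
  by (simp add: eval2_def map_poly_pCons)

lemma eval2_0 [simp]: "eval2 0 p = 0"
  by (simp add: eval2_def)

lemma eval2_conv: "eval2 f p = poly (poly f [:snd p:]) (fst p)"
  by (induction f) (auto simp: eval2_pCons)

lemma eval2_poly_poly: "eval2 f (x, poly r x) = poly (poly f r) x"
  by (induction f) (auto simp: eval2_pCons)

lemma eval2_add: "eval2 (f + g) p = eval2 f p + eval2 g p"
  and eval2_mult: "eval2 (f * g) p = eval2 f p * eval2 g p"
  and eval2_const: "eval2 [:[:c:]:] p = c"
  and eval2_fst: "eval2 [:[:0, 1:]:] p = fst p"
  and eval2_snd: "eval2 [:0, 1:] p = snd p"
  by (simp_all add: eval2_conv)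

lemma eval2_diff: "eval2 (f - g) p = eval2 f p - (eval2 g p :: 'a::comm_ring_1)"
  by (simp add: eval2_conv)

definition poly_fun2 :: "('a::comm_semiring_1 \<times> 'a \<Rightarrow> 'a) set" where
  "poly_fun2 = range eval2"

lemma poly_fun2_const: "(\<lambda>_. c) \<in> poly_fun2"
  unfolding poly_fun2_def by (rule range_eqI[of _ _ "[:[:c:]:]"]) (simp add: fun_eq_iff eval2_const)

lemma poly_fun2_fst: "fst \<in> poly_fun2"
  unfolding poly_fun2_def by (rule range_eqI[of _ _ "[:[:0, 1:]:]"]) (simp add: fun_eq_iff eval2_fst)

lemma poly_fun2_snd: "snd \<in> poly_fun2"
  unfolding poly_fun2_def by (rule range_eqI[of _ _ "[:0, 1:]"]) (simp add: fun_eq_iff eval2_snd)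

lemma poly_fun2_add:
  assumes "g \<in> poly_fun2" "h \<in> poly_fun2"
  shows "(\<lambda>Q. g Q + h Q) \<in> poly_fun2"
proof -
  from assms obtain P R where "g = eval2 P" "h = eval2 R" by (auto simp: poly_fun2_def)
  then have "(\<lambda>Q. g Q + h Q) = eval2 (P + R)" by (simp add: fun_eq_iff eval2_add)
  then show ?thesis by (simp add: poly_fun2_def)
qed

lemma poly_fun2_mult:
  assumes "g \<in> poly_fun2" "h \<in> poly_fun2"
  shows "(\<lambda>Q. g Q * h Q) \<in> poly_fun2"
proof -
  from assms obtain P R where "g = eval2 P" "h = eval2 R" by (auto simp: poly_fun2_def)
  then have "(\<lambda>Q. g Q * h Q) = eval2 (P * R)" by (simp add: fun_eq_iff eval2_mult)
  then show ?thesis by (simp add: poly_fun2_def)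
qed

lemma poly_fun2_diff:
  assumes "g \<in> poly_fun2" "h \<in> poly_fun2"
  shows "(\<lambda>Q. g Q - h Q :: 'a::comm_ring_1) \<in> poly_fun2"
proof -
  from assms obtain P R where "g = eval2 P" "h = eval2 R" by (auto simp: poly_fun2_def)
  then have "(\<lambda>Q. g Q - h Q) = eval2 (P - R)" by (simp add: fun_eq_iff eval2_diff)
  then show ?thesis by (simp add: poly_fun2_def)
qed

lemma poly_fun2_power: "g \<in> poly_fun2 \<Longrightarrow> (\<lambda>Q. g Q ^ k) \<in> poly_fun2"
  by (induction k) (auto intro: poly_fun2_mult poly_fun2_const)

definition sqdist :: "'a::comm_ring_1 \<times> 'a \<Rightarrow> 'a \<times> 'a \<Rightarrow> 'a" where
  "sqdist A Q = (fst Q - fst A)^2 + (snd Q - snd A)^2"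

lemma poly_fun2_sqdist: "sqdist A \<in> poly_fun2"
  unfolding sqdist_def
  by (intro poly_fun2_add poly_fun2_power poly_fun2_diff poly_fun2_fst poly_fun2_snd poly_fun2_const)

section \<open>Zariski topology of the plane\<close>

lemma zariski_closed2_Inter:
  fixes TT :: "('a::comm_semiring_1 \<times> 'a) set set"
  assumes "\<And>T. T \<in> TT \<Longrightarrow> zariski_closed2 T"
  shows "zariski_closed2 (\<Inter>TT)"
proof -
  have "\<forall>T\<in>TT. \<exists>F. T = {p. \<forall>g\<in>F. eval2 g p = 0}"
    using assms unfolding zariski_closed2_def by blast
  then obtain G where G: "\<forall>T\<in>TT. T = {p. \<forall>g\<in>G T. eval2 g p = 0}"
    by (rule bchoice [elim_format]) blast
  have "\<Inter>TT = {p. \<forall>g\<in>(\<Union>T\<in>TT. G T). eval2 g p = 0}"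
  proof (intro equalityI subsetI)
    fix p assume "p \<in> \<Inter>TT"
    with G show "p \<in> {p. \<forall>g\<in>(\<Union>T\<in>TT. G T). eval2 g p = 0}" by blast
  next
    fix p assume "p \<in> {p. \<forall>g\<in>(\<Union>T\<in>TT. G T). eval2 g p = 0}"
    with G show "p \<in> \<Inter>TT" by blast
  qed
  then show ?thesis unfolding zariski_closed2_def by blast
qed

lemma zariski_closed2_Int: "zariski_closed2 S \<Longrightarrow> zariski_closed2 T \<Longrightarrow> zariski_closed2 (S \<inter> T)"
  using zariski_closed2_Inter[of "{S, T}"] by auto

lemma zariski_closed2_zero_set: "h \<in> poly_fun2 \<Longrightarrow> zariski_closed2 {Q. h Q = 0}"
proof -
  assume "h \<in> poly_fun2"
  then obtain P where "h = eval2 P" unfolding poly_fun2_def by blast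
  then have "{Q. h Q = 0} = {Q. \<forall>g\<in>{P}. eval2 g Q = 0}" by simp
  then show ?thesis unfolding zariski_closed2_def by blast
qed

lemma zariski_closed2_closure: "zariski_closed2 (zariski_closure2 S)"
  unfolding zariski_closure2_def by (rule zariski_closed2_Inter) auto

lemma subset_zariski_closure2: "S \<subseteq> zariski_closure2 S"
  unfolding zariski_closure2_def by auto

lemma zariski_closure2_minimal: "zariski_closed2 T \<Longrightarrow> S \<subseteq> T \<Longrightarrow> zariski_closure2 S \<subseteq> T"
  unfolding zariski_closure2_def by auto

lemma zariski_irreducible2_singleton: "zariski_irreducible2 {q :: 'a::comm_ring_1 \<times> 'a}"
proof -
  have "{q} = {Q. fst Q - fst q = 0} \<inter> {Q. snd Q - snd q = 0}"
    by (cases q) auto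
  moreover have "zariski_closed2 {Q. fst Q - fst q = 0}" "zariski_closed2 {Q. snd Q - snd q = 0}"
    by (intro zariski_closed2_zero_set poly_fun2_diff poly_fun2_fst poly_fun2_snd poly_fun2_const)+
  ultimately have "zariski_closed2 {q}" by (metis zariski_closed2_Int)
  then show ?thesis
    unfolding zariski_irreducible2_def by (metis Un_empty insert_not_empty singleton_Un_iff)
qed

lemma zariski_irreducible2_closure_Union_chain:
  assumes C: "C \<noteq> {}" "\<And>Z. Z \<in> C \<Longrightarrow> zariski_irreducible2 Z"
    and chain: "\<And>Z1 Z2. Z1 \<in> C \<Longrightarrow> Z2 \<in> C \<Longrightarrow> Z1 \<subseteq> Z2 \<or> Z2 \<subseteq> Z1"
  shows "zariski_irreducible2 (zariski_closure2 (\<Union>C))"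
proof -
  let ?U = "zariski_closure2 (\<Union>C)"
  have "?U = S1 \<or> ?U = S2"
    if S: "zariski_closed2 S1" "zariski_closed2 S2" and U: "?U = S1 \<union> S2" for S1 S2
  proof (rule ccontr)
    assume proper: "\<not> (?U = S1 \<or> ?U = S2)"
    have split: "Z \<subseteq> S1 \<or> Z \<subseteq> S2" if Z: "Z \<in> C" for Z
    proof -
      have "Z = (Z \<inter> S1) \<union> (Z \<inter> S2)"
        using Z U subset_zariski_closure2[of "\<Union>C"] by blast
      moreover have "zariski_closed2 (Z \<inter> S1)" "zariski_closed2 (Z \<inter> S2)"
        using C(2)[OF Z] S zariski_closed2_Int unfolding zariski_irreducible2_def by blast+
      ultimately show ?thesis using C(2)[OF Z] unfolding zariski_irreducible2_def by blast
    qed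
    have not_in: "\<exists>Z\<in>C. \<not> Z \<subseteq> S" if "S = S1 \<or> S = S2" for S
    proof (rule ccontr)
      assume "\<not> ?thesis"
      then have "\<Union>C \<subseteq> S" by blast
      moreover have "zariski_closed2 S" using that S by blast
      ultimately have "?U \<subseteq> S" by (rule zariski_closure2_minimal[rotated])
      then show False using proper U that by blast
    qed
    obtain Z1 where "Z1 \<in> C" "\<not> Z1 \<subseteq> S1" using not_in[of S1] by blast
    obtain Z2 where "Z2 \<in> C" "\<not> Z2 \<subseteq> S2" using not_in[of S2] by blast
    from chain[OF \<open>Z1 \<in> C\<close> \<open>Z2 \<in> C\<close>] show False
      using split[OF \<open>Z1 \<in> C\<close>] split[OF \<open>Z2 \<in> C\<close>] \<open>\<not> Z1 \<subseteq> S1\<close> \<open>\<not> Z2 \<subseteq> S2\<close>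
      by blast
  qed
  moreover have "?U \<noteq> {}"
    using C subset_zariski_closure2[of "\<Union>C"] unfolding zariski_irreducible2_def by blast
  ultimately show ?thesis
    using zariski_closed2_closure unfolding zariski_irreducible2_def by blast
qed

lemma exists_irreducible_component2:
  fixes X :: "('a::comm_ring_1 \<times> 'a) set"
  assumes X: "zariski_closed2 X" and q: "q \<in> X"
  obtains M where "irreducible_component2 M X" "q \<in> M"
proof -
  define AA where "AA = {Z. zariski_irreducible2 Z \<and> q \<in> Z \<and> Z \<subseteq> X}"
  have "\<exists>M\<in>AA. \<forall>Z\<in>AA. M \<subseteq> Z \<longrightarrow> Z = M"
  proof (rule Zorn_Lemma2, intro ballI)
    fix C assume "C \<in> chains AA"
    then have CA: "C \<subseteq> AA" and chain: "\<And>Z1 Z2. Z1 \<in> C \<Longrightarrow> Z2 \<in> C \<Longrightarrow> Z1 \<subseteq> Z2 \<or> Z2 \<subseteq> Z1"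
      unfolding chains_def chain_subset_def by auto
    show "\<exists>U\<in>AA. \<forall>Z\<in>C. Z \<subseteq> U"
    proof (cases "C = {}")
      case True
      have "{q} \<in> AA" using zariski_irreducible2_singleton[of q] q unfolding AA_def by blast
      then show ?thesis using True by blast
    next
      case False
      let ?U = "zariski_closure2 (\<Union>C)"
      have "zariski_irreducible2 Z" if "Z \<in> C" for Z using that CA unfolding AA_def by blast
      then have "zariski_irreducible2 ?U"
        using zariski_irreducible2_closure_Union_chain[OF False] chain by blast
      moreover have "\<Union>C \<subseteq> X" using CA unfolding AA_def by blast
      then have "?U \<subseteq> X" by (rule zariski_closure2_minimal[OF X])
      moreover have "q \<in> \<Union>C" using False CA unfolding AA_def by blast
      then have "q \<in> ?U" using subset_zariski_closure2 by blast
      ultimately have "?U \<in> AA" unfolding AA_def by blast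
      moreover have "\<forall>Z\<in>C. Z \<subseteq> ?U" using subset_zariski_closure2[of "\<Union>C"] by blast
      ultimately show ?thesis by blast
    qed
  qed
  then obtain M where M: "M \<in> AA" "\<forall>Z\<in>AA. M \<subseteq> Z \<longrightarrow> Z = M" by blast
  have "irreducible_component2 M X"
    unfolding irreducible_component2_def
  proof (intro conjI allI impI)
    show "M \<subseteq> X" "zariski_irreducible2 M" using M(1) unfolding AA_def by auto
    fix N assume "zariski_irreducible2 N \<and> M \<subseteq> N \<and> N \<subseteq> X"
    then show "N = M" using M unfolding AA_def by blast
  qed
  moreover have "q \<in> M" using M(1) unfolding AA_def by blast
  ultimately show ?thesis by (rule that)
qed

lemma zariski_closure2_irreducible_Diff:
  assumes M: "zariski_irreducible2 M" and Z: "zariski_closed2 Z" and "\<not> M \<subseteq> Z"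
  shows "zariski_closure2 (M - Z) = M"
proof -
  have Mc: "zariski_closed2 M" using M unfolding zariski_irreducible2_def by blast
  have "zariski_closure2 (M - Z) \<subseteq> M" by (rule zariski_closure2_minimal[OF Mc]) blast
  then have "M = zariski_closure2 (M - Z) \<union> (M \<inter> Z)" using subset_zariski_closure2[of "M - Z"] by blast
  then have "M = zariski_closure2 (M - Z) \<or> M = M \<inter> Z"
    using M zariski_closed2_closure zariski_closed2_Int[OF Mc Z]
    unfolding zariski_irreducible2_def by blast
  then show ?thesis using assms(3) by blast
qed

section \<open>Reduction modulo \<open>c\<^sup>2 n = e\<close>\<close>

text \<open>The power of \<open>n\<close> clears the denominator of \<open>c\<^sup>2 = e / n(Q)\<close>.\<close>
definition linear_in_root ::
    "('a::comm_ring_1 \<times> 'a \<Rightarrow> 'a) \<Rightarrow> 'a \<Rightarrow> ('a \<times> 'a \<Rightarrow> 'a \<Rightarrow> 'a) \<Rightarrow> bool" where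
  "linear_in_root n e H \<longleftrightarrow> (\<exists>k a b. a \<in> poly_fun2 \<and> b \<in> poly_fun2 \<and>
     (\<forall>Q c. c^2 * n Q = e \<longrightarrow> n Q ^ k * H Q c = a Q + c * b Q))"

lemma linear_in_rootI:
  assumes "a \<in> poly_fun2" "b \<in> poly_fun2"
    and "\<And>Q c. c^2 * n Q = e \<Longrightarrow> n Q ^ k * H Q c = a Q + c * b Q"
  shows "linear_in_root n e H"
  using assms unfolding linear_in_root_def by blast

lemma linear_in_rootE:
  assumes "linear_in_root n e H"
  obtains k a b where "a \<in> poly_fun2" "b \<in> poly_fun2"
    "\<And>Q c. c^2 * n Q = e \<Longrightarrow> n Q ^ k * H Q c = a Q + c * b Q"
  using assms unfolding linear_in_root_def by blast

lemma linear_in_root_const: "h \<in> poly_fun2 \<Longrightarrow> linear_in_root n e (\<lambda>Q c. h Q)"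
  by (rule linear_in_rootI[where k = 0 and b = "\<lambda>_. 0"]) (auto intro: poly_fun2_const)

lemma linear_in_root_root: "linear_in_root n e (\<lambda>Q c. c)"
  by (rule linear_in_rootI[where k = 0 and a = "\<lambda>_. 0" and b = "\<lambda>_. 1"])
    (auto intro: poly_fun2_const)

lemma linear_in_root_add:
  assumes n: "n \<in> poly_fun2" and "linear_in_root n e H1" "linear_in_root n e H2"
  shows "linear_in_root n e (\<lambda>Q c. H1 Q c + H2 Q c)"
proof -
  obtain k1 a1 b1 where 1: "a1 \<in> poly_fun2" "b1 \<in> poly_fun2"
    "\<And>Q c. c^2 * n Q = e \<Longrightarrow> n Q ^ k1 * H1 Q c = a1 Q + c * b1 Q"
    using assms(2) by (elim linear_in_rootE) blast
  obtain k2 a2 b2 where 2: "a2 \<in> poly_fun2" "b2 \<in> poly_fun2"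
    "\<And>Q c. c^2 * n Q = e \<Longrightarrow> n Q ^ k2 * H2 Q c = a2 Q + c * b2 Q"
    using assms(3) by (elim linear_in_rootE) blast
  show ?thesis
  proof (rule linear_in_rootI[where k = "k1 + k2"])
    show "(\<lambda>Q. n Q ^ k2 * a1 Q + n Q ^ k1 * a2 Q) \<in> poly_fun2"
      "(\<lambda>Q. n Q ^ k2 * b1 Q + n Q ^ k1 * b2 Q) \<in> poly_fun2"
      using n 1 2 by (auto intro!: poly_fun2_add poly_fun2_mult poly_fun2_power)
    fix Q c assume c: "c^2 * n Q = e"
    have "n Q ^ (k1 + k2) * (H1 Q c + H2 Q c)
        = n Q ^ k2 * (n Q ^ k1 * H1 Q c) + n Q ^ k1 * (n Q ^ k2 * H2 Q c)"
      by (simp add: power_add algebra_simps)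
    also have "\<dots> = (n Q ^ k2 * a1 Q + n Q ^ k1 * a2 Q) + c * (n Q ^ k2 * b1 Q + n Q ^ k1 * b2 Q)"
      using 1(3)[OF c] 2(3)[OF c] by (simp add: algebra_simps)
    finally show "n Q ^ (k1 + k2) * (H1 Q c + H2 Q c) = \<dots>" .
  qed
qed

lemma linear_in_root_mult:
  assumes n: "n \<in> poly_fun2" and "linear_in_root n e H1" "linear_in_root n e H2"
  shows "linear_in_root n e (\<lambda>Q c. H1 Q c * H2 Q c)"
proof -
  obtain k1 a1 b1 where 1: "a1 \<in> poly_fun2" "b1 \<in> poly_fun2"
    "\<And>Q c. c^2 * n Q = e \<Longrightarrow> n Q ^ k1 * H1 Q c = a1 Q + c * b1 Q"
    using assms(2) by (elim linear_in_rootE) blast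
  obtain k2 a2 b2 where 2: "a2 \<in> poly_fun2" "b2 \<in> poly_fun2"
    "\<And>Q c. c^2 * n Q = e \<Longrightarrow> n Q ^ k2 * H2 Q c = a2 Q + c * b2 Q"
    using assms(3) by (elim linear_in_rootE) blast
  show ?thesis
  proof (rule linear_in_rootI[where k = "Suc (k1 + k2)"])
    show "(\<lambda>Q. n Q * (a1 Q * a2 Q) + e * (b1 Q * b2 Q)) \<in> poly_fun2"
      "(\<lambda>Q. n Q * (a1 Q * b2 Q + a2 Q * b1 Q)) \<in> poly_fun2"
      using n 1 2 by (auto intro!: poly_fun2_add poly_fun2_mult poly_fun2_const)
    fix Q c assume c: "c^2 * n Q = e"
    have "n Q ^ Suc (k1 + k2) * (H1 Q c * H2 Q c)
        = n Q * ((n Q ^ k1 * H1 Q c) * (n Q ^ k2 * H2 Q c))"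
      by (simp add: power_add algebra_simps)
    also have "\<dots> = n Q * (a1 Q * a2 Q) + (c^2 * n Q) * (b1 Q * b2 Q)
        + c * (n Q * (a1 Q * b2 Q + a2 Q * b1 Q))"
      using 1(3)[OF c] 2(3)[OF c] by (simp add: power2_eq_square algebra_simps)
    finally show "n Q ^ Suc (k1 + k2) * (H1 Q c * H2 Q c)
        = n Q * (a1 Q * a2 Q) + e * (b1 Q * b2 Q) + c * (n Q * (a1 Q * b2 Q + a2 Q * b1 Q))"
      using c by simp
  qed
qed

lemma linear_in_root_poly:
  assumes "n \<in> poly_fun2" "linear_in_root n e X"
  shows "linear_in_root n e (\<lambda>Q c. poly p (X Q c))"
proof (induction p)
  case 0
  show ?case using linear_in_root_const[OF poly_fun2_const[of 0]] by simp
next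
  case (pCons a p)
  show ?case
    using linear_in_root_add[OF assms(1) linear_in_root_const[OF poly_fun2_const]
        linear_in_root_mult[OF assms pCons.IH]]
    by simp
qed

lemma linear_in_root_eval2:
  assumes "n \<in> poly_fun2" "linear_in_root n e X" "linear_in_root n e Y"
  shows "linear_in_root n e (\<lambda>Q c. eval2 f (X Q c, Y Q c))"
proof (induction f)
  case 0
  show ?case using linear_in_root_const[OF poly_fun2_const[of 0]] by simp
next
  case (pCons a f)
  show ?case
    using linear_in_root_add[OF assms(1) linear_in_root_poly[OF assms(1,2)]
        linear_in_root_mult[OF assms(1,3) pCons.IH]]
    by (simp add: eval2_pCons)
qed

section \<open>Fibres of the conchoid\<close>

definition towards :: "'a::comm_ring_1 \<times> 'a \<Rightarrow> 'a \<times> 'a \<Rightarrow> 'a \<Rightarrow> 'a \<times> 'a" where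
  "towards A Q c = (fst Q + c * (fst A - fst Q), snd Q + c * (snd A - snd Q))"

lemma linear_in_root_eval2_towards:
  "linear_in_root (sqdist A) e (\<lambda>Q c. eval2 f (towards A Q c))"
  unfolding towards_def
  by (intro linear_in_root_eval2 linear_in_root_add linear_in_root_mult linear_in_root_const
      linear_in_root_root poly_fun2_sqdist poly_fun2_fst poly_fun2_snd poly_fun2_diff poly_fun2_const)

lemma sqdist_towards: "sqdist A (towards A Q c) = (1 - c)^2 * sqdist A Q"
  unfolding towards_def sqdist_def by (simp add: power2_eq_square algebra_simps)

lemma towards_mem_conchoid_B:
  fixes A :: "'a::field \<times> 'a"
  assumes c: "c^2 * sqdist A Q = d^2" and nd: "sqdist A Q \<noteq> d^2"
    and on_curve: "eval2 f (towards A Q c) = 0"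
  shows "(Q, towards A Q c, 1 / sqdist A (towards A Q c)) \<in> conchoid_B f A d"
proof -
  obtain y1 y2 where y: "towards A Q c = (y1, y2)" by (cases "towards A Q c")
  then have y1: "y1 = fst Q + c * (fst A - fst Q)" and y2: "y2 = snd Q + c * (snd A - snd Q)"
    unfolding towards_def by auto
  have "c \<noteq> 1" "sqdist A Q \<noteq> 0" using c nd by auto
  then have "sqdist A (y1, y2) \<noteq> 0" using y sqdist_towards[of A Q c] by simp
  moreover have "(fst Q - y1)^2 + (snd Q - y2)^2 = c^2 * sqdist A Q"
    "(y2 - snd A) * (fst Q - y1) - (y1 - fst A) * (snd Q - y2) = 0"
    unfolding y1 y2 sqdist_def by (simp_all add: power2_eq_square algebra_simps)
  ultimately show ?thesis
    using c on_curve y unfolding conchoid_B_def sqdist_def by (cases Q) auto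
qed

lemma mem_conchoid_if_foot_on_curve:
  fixes A :: "'a::field \<times> 'a"
  assumes "c^2 * sqdist A Q = d^2" "sqdist A Q \<noteq> d^2" "eval2 f (towards A Q c) = 0"
  shows "Q \<in> conchoid f A d"
proof -
  have "Q \<in> pi1 ` conchoid_B f A d"
    using towards_mem_conchoid_B[OF assms] unfolding pi1_def by force
  then show ?thesis unfolding conchoid_def using subset_zariski_closure2 by blast
qed

lemma parallel_imp_multiple:
  fixes v1 v2 w1 w2 :: "'a::field"
  assumes "v2 * w1 - v1 * w2 = 0" "(v1, v2) \<noteq> (0, 0)"
  obtains l where "w1 = l * v1" "w2 = l * v2"
proof (cases "v1 = 0")
  case True
  then show ?thesis using assms that[of "w2 / v2"] by auto
next
  case False
  then show ?thesis using assms that[of "w1 / v1"] by (auto simp: field_simps)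
qed

lemma conchoid_B_imp_towards:
  fixes A :: "'a::field \<times> 'a"
  assumes B: "(Q, y, w) \<in> conchoid_B f A d" and Q: "sqdist A Q \<noteq> 0"
  obtains c where "c^2 * sqdist A Q = d^2" "y = towards A Q c" "eval2 f y = 0"
proof -
  obtain y1 y2 where y: "y = (y1, y2)" by (cases y)
  have on_curve: "eval2 f y = 0"
    and dist: "(fst Q - y1)^2 + (snd Q - y2)^2 = d^2"
    and par: "(y2 - snd A) * (fst Q - y1) - (y1 - fst A) * (snd Q - y2) = 0"
    and y_ne_A: "(y1 - fst A, y2 - snd A) \<noteq> (0, 0)"
    using B unfolding y conchoid_B_def by (cases Q; auto)+
  obtain l where l: "fst Q - y1 = l * (y1 - fst A)" "snd Q - y2 = l * (y2 - snd A)"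
    using parallel_imp_multiple[OF par y_ne_A] .
  have "fst Q - fst A = (1 + l) * (y1 - fst A)" "snd Q - snd A = (1 + l) * (y2 - snd A)"
    using l by (simp_all add: algebra_simps)
  then have "sqdist A Q = (1 + l)^2 * sqdist A y"
    unfolding sqdist_def y by (simp add: power_mult_distrib distrib_left)
  then have l1: "1 + l \<noteq> 0" using Q by auto
  define c where "c = l / (1 + l)"
  have "y = towards A Q c"
    using l l1 unfolding y towards_def c_def by (auto simp: field_simps)
  moreover have "c^2 * sqdist A Q = d^2"
  proof -
    have "c^2 * sqdist A Q = l^2 * sqdist A y"
      using \<open>sqdist A Q = _\<close> l1 by (simp add: c_def power_divide)
    also have "\<dots> = d^2"
      using dist unfolding l sqdist_def y by (simp add: power_mult_distrib distrib_left)
    finally show ?thesis .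
  qed
  ultimately show ?thesis using that on_curve by blast
qed

lemma conchoid_fiber_eq_singleton:
  fixes A :: "'a::field \<times> 'a"
  assumes c: "c^2 * sqdist A Q = d^2" and nd: "sqdist A Q \<noteq> d^2"
    and on_curve: "eval2 f (towards A Q c) = 0" and off_curve: "eval2 f (towards A Q (-c)) \<noteq> 0"
  shows "pi2 ` (pi1 -` {Q} \<inter> conchoid_B f A d) = {towards A Q c}"
proof -
  have Q: "sqdist A Q \<noteq> 0" using c nd by auto
  have "towards A Q c \<in> pi2 ` (pi1 -` {Q} \<inter> conchoid_B f A d)"
    using towards_mem_conchoid_B[OF c nd on_curve] unfolding pi1_def pi2_def by force
  moreover have "y = towards A Q c" if "y \<in> pi2 ` (pi1 -` {Q} \<inter> conchoid_B f A d)" for y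
  proof -
    from that obtain w where "(Q, y, w) \<in> conchoid_B f A d"
      unfolding pi1_def pi2_def by auto
    then obtain c' where c': "c'^2 * sqdist A Q = d^2" "y = towards A Q c'" "eval2 f y = 0"
      using Q by (rule conchoid_B_imp_towards)
    have "c'^2 = c^2" using c c'(1) Q by (metis mult_right_cancel)
    then have "c' = c \<or> c' = -c" by (simp add: power2_eq_iff)
    then show ?thesis using c' off_curve by auto
  qed
  ultimately show ?thesis by blast
qed

section \<open>Irreducible curves meeting a line infinitely often\<close>

lemma poly_eq_0_if_infinite_roots:
  fixes p :: "'a::idom poly"
  assumes "infinite X" "\<forall>x\<in>X. poly p x = 0"
  shows "p = 0"
proof (rule ccontr)
  assume "p \<noteq> 0"
  then have "finite {x. poly p x = 0}" by (rule poly_roots_finite)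
  moreover have "X \<subseteq> {x. poly p x = 0}" using assms(2) by blast
  ultimately show False using assms(1) finite_subset by blast
qed

lemma is_unit_poly_polyE:
  fixes h :: "'a::field poly poly"
  assumes "is_unit h"
  obtains c where "c \<noteq> 0" "h = [:[:c:]:]"
proof -
  obtain h0 where "h = [:h0:]" "is_unit h0" using assms by (auto simp: is_unit_poly_iff)
  moreover obtain c where "h0 = [:c:]" "c dvd 1" using \<open>is_unit h0\<close> by (auto simp: is_unit_poly_iff)
  ultimately show ?thesis using that by (metis dvd_0_left_iff one_neq_zero)
qed

lemma curve_eq_curve_dvd:
  fixes f g :: "'a::field poly poly"
  assumes "irreducible f" "g dvd f" "\<not> is_unit g"
  shows "curve f = curve g"
proof -
  obtain h where f: "f = g * h" using assms(2) by (elim dvdE)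
  then have "is_unit h" using irreducibleD assms(1,3) by blast
  then obtain c where "c \<noteq> 0" "h = [:[:c:]:]" by (rule is_unit_poly_polyE)
  then have "eval2 f p = eval2 g p * c" for p by (simp only: f eval2_mult eval2_const)
  with \<open>c \<noteq> 0\<close> show ?thesis unfolding curve_def by simp
qed

lemma curve_eq_graph:
  fixes f :: "'a::field poly poly"
  assumes "irreducible f" "infinite X" "\<forall>x\<in>X. eval2 f (x, poly r x) = 0"
  shows "curve f = {(x, y). y = poly r x}"
proof -
  have "poly f r = 0"
    using poly_eq_0_if_infinite_roots[of X "poly f r"] assms(2,3) by (simp add: eval2_poly_poly)
  then have "[:-r, 1:] dvd f" by (simp add: poly_eq_0_iff_dvd)
  moreover have "\<not> is_unit [:-r, 1:]" by (simp add: is_unit_poly_iff)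
  ultimately have "curve f = curve [:-r, 1:]" using curve_eq_curve_dvd assms(1) by blast
  also have "\<dots> = {(x, y). y = poly r x}"
  proof -
    have "eval2 [:-r, 1:] p = snd p - poly r (fst p)" for p by (simp add: eval2_pCons)
    then show ?thesis unfolding curve_def by auto
  qed
  finally show ?thesis .
qed

lemma curve_eq_vertical_line:
  fixes f :: "'a::field poly poly"
  assumes "irreducible f" "infinite Y" "\<forall>y\<in>Y. eval2 f (a, y) = 0"
  shows "curve f = {(x, y). x = a}"
proof -
  have "map_poly (\<lambda>c. poly c a) f = 0"
    using poly_eq_0_if_infinite_roots[of Y] assms(2,3) by (simp add: eval2_def)
  then have "poly (coeff f i) a = 0" for i
    by (metis coeff_0 coeff_map_poly poly_0)
  then have "[:[:-a, 1:]:] dvd f" by (simp add: const_poly_dvd_iff poly_eq_0_iff_dvd)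
  moreover have "\<not> is_unit [:[:-a, 1:]:]" by (simp add: is_unit_poly_iff)
  ultimately have "curve f = curve [:[:-a, 1:]:]" using curve_eq_curve_dvd assms(1) by blast
  also have "\<dots> = {(x, y). x = a}"
  proof -
    have "eval2 [:[:-a, 1:]:] p = fst p - a" for p by (simp add: eval2_conv)
    then show ?thesis unfolding curve_def by auto
  qed
  finally show ?thesis .
qed

definition line_point :: "'a::comm_ring_1 \<times> 'a \<Rightarrow> 'a \<times> 'a \<Rightarrow> 'a \<Rightarrow> 'a \<times> 'a" where
  "line_point A e t = (fst A + t * fst e, snd A + t * snd e)"

lemma curve_eq_line_through:
  fixes f :: "'a::field poly poly"
  assumes irr: "irreducible f" and e: "e \<noteq> (0, 0)" and T: "infinite T"
    and zeros: "\<forall>t\<in>T. eval2 f (line_point A e t) = 0"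
  shows "curve f = line_through A (snd e) (- fst e)"
proof (cases "fst e = 0")
  case False
  define r where "r = [:snd A - fst A * snd e / fst e, snd e / fst e:]"
  have r: "poly r (fst A + t * fst e) = snd A + t * snd e" for t
    unfolding r_def using False by (simp add: field_simps)
  have "inj_on (\<lambda>t. fst A + t * fst e) T" using False by (auto simp: inj_on_def)
  then have "infinite ((\<lambda>t. fst A + t * fst e) ` T)" using T finite_imageD by blast
  moreover have "\<forall>x\<in>(\<lambda>t. fst A + t * fst e) ` T. eval2 f (x, poly r x) = 0"
    using zeros by (auto simp: r line_point_def)
  ultimately have "curve f = {(x, y). y = poly r x}" by (rule curve_eq_graph[OF irr])
  also have "\<dots> = line_through A (snd e) (- fst e)"
    unfolding line_through_def r_def using False by (auto simp: field_simps)
  finally show ?thesis .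
next
  case True
  then have e2: "snd e \<noteq> 0" using e by (cases e) auto
  have "inj_on (\<lambda>t. snd A + t * snd e) T" using e2 by (auto simp: inj_on_def)
  then have "infinite ((\<lambda>t. snd A + t * snd e) ` T)" using T finite_imageD by blast
  moreover have "\<forall>y\<in>(\<lambda>t. snd A + t * snd e) ` T. eval2 f (fst A, y) = 0"
    using zeros True by (auto simp: line_point_def)
  ultimately have "curve f = {(x, y). x = fst A}" by (rule curve_eq_vertical_line[OF irr])
  also have "\<dots> = line_through A (snd e) (- fst e)"
    unfolding line_through_def using True e2 by auto
  finally show ?thesis .
qed

section \<open>A point with exactly one foot on the curve\<close>

lemma exists_sqrt_off_progression:
  fixes x d :: "'a::{alg_closed_field, field_char_0}"
  assumes x: "x \<noteq> 0" and d: "d \<noteq> 0"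
  obtains s where "s^2 = x" "\<forall>j::nat. s + of_nat j * d \<noteq> 0"
proof -
  obtain r where r: "r^2 = x" using nth_root_exists[of 2 x] by auto
  have "(\<forall>j::nat. r + of_nat j * d \<noteq> 0) \<or> (\<forall>j::nat. - r + of_nat j * d \<noteq> 0)"
  proof (rule ccontr)
    assume "\<not> ?thesis"
    then obtain i j :: nat where ij: "r + of_nat i * d = 0" "- r + of_nat j * d = 0" by auto
    then have "of_nat (i + j) * d = 0" by (simp add: algebra_simps)
    then have "i + j = 0" using d by (metis mult_eq_0_iff of_nat_eq_0_iff)
    then have "i = 0" by simp
    then show False using ij r x by auto
  qed
  then show ?thesis using that r by (metis power2_minus)
qed

lemma towards_line_point:
  fixes A e :: "'a::field \<times> 'a"
  assumes e: "fst e^2 + snd e^2 = 1" and td: "t + d \<noteq> 0"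
  defines "Q \<equiv> line_point A e (t + d)" and "c \<equiv> d / (t + d)"
  shows "sqdist A Q = (t + d)^2"
    and "towards A Q c = line_point A e t"
    and "towards A Q (- c) = line_point A e (t + 2 * d)"
proof -
  have "sqdist A Q = (t + d)^2 * (fst e^2 + snd e^2)"
    unfolding Q_def line_point_def sqdist_def by (simp add: power2_eq_square algebra_simps)
  then show "sqdist A Q = (t + d)^2" using e by simp
  show "towards A Q c = line_point A e t" "towards A Q (- c) = line_point A e (t + 2 * d)"
    unfolding Q_def c_def towards_def line_point_def using td by (simp_all add: field_simps)
qed

lemma exists_point_with_one_foot_on_curve:
  fixes f :: "'a::{alg_closed_field, field_char_0} poly poly"
  assumes irr: "irreducible f" and d: "d \<noteq> 0" and C0: "curve0 f A \<noteq> {}"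
    and not_line: "\<forall>\<alpha> \<beta>. (\<alpha>, \<beta>) \<noteq> (0, 0) \<longrightarrow> curve f \<noteq> line_through A \<alpha> \<beta>"
  obtains Q c where "sqdist A Q \<noteq> d^2" "c^2 * sqdist A Q = d^2"
    "eval2 f (towards A Q c) = 0" "eval2 f (towards A Q (- c)) \<noteq> 0"
proof (rule ccontr)
  assume "\<not> thesis"
  note found = that
  have reflect: "eval2 f (towards A Q (- c)) = 0"
    if "sqdist A Q \<noteq> d^2" "c^2 * sqdist A Q = d^2" "eval2 f (towards A Q c) = 0" for Q c
    using that found \<open>\<not> thesis\<close> by blast
  obtain u where u: "eval2 f u = 0" "sqdist A u \<noteq> 0"
    using C0 unfolding curve0_def curve_def sqdist_def by auto
  obtain s where s: "s^2 = sqdist A u" "\<forall>j::nat. s + of_nat j * d \<noteq> 0"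
    using exists_sqrt_off_progression[OF u(2) d] .
  have s0: "s \<noteq> 0" using s(2) by (metis add.right_neutral mult_zero_left of_nat_0)
  define e where "e = ((fst u - fst A) / s, (snd u - snd A) / s)"
  have e: "fst e^2 + snd e^2 = 1"
    using s s0 u(2) unfolding e_def sqdist_def by (simp add: power_divide add_divide_distrib[symmetric])
  have step: "eval2 f (line_point A e (t + 2 * d)) = 0"
    if on_curve: "eval2 f (line_point A e t) = 0" and t: "t \<noteq> 0" "t + d \<noteq> 0" "t + 2 * d \<noteq> 0" for t
  proof -
    note Q = towards_line_point[OF e t(2), of A]
    have "(t + d)^2 \<noteq> d^2"
      using t d by (auto simp: power2_eq_iff algebra_simps)
    moreover have "(d / (t + d))^2 * (t + d)^2 = d^2" using t(2) by (simp add: power_divide)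
    ultimately show ?thesis
      using reflect[of "line_point A e (t + d)" "d / (t + d)"] Q on_curve by simp
  qed
  have progression: "eval2 f (line_point A e (s + 2 * of_nat k * d)) = 0" for k :: nat
  proof (induction k)
    case 0
    show ?case using u(1) s0 by (simp add: line_point_def e_def)
  next
    case (Suc k)
    have "s + of_nat (2 * k) * d \<noteq> 0" "s + of_nat (2 * k + 1) * d \<noteq> 0"
      "s + of_nat (2 * k + 2) * d \<noteq> 0"
      using s(2) by blast+
    then have "s + 2 * of_nat k * d \<noteq> 0" "s + 2 * of_nat k * d + d \<noteq> 0"
      "s + 2 * of_nat k * d + 2 * d \<noteq> 0"
      by (auto simp: algebra_simps)
    with step[OF Suc.IH] show ?case by (simp add: algebra_simps)
  qed
  have "inj (\<lambda>k::nat. s + 2 * of_nat k * d)" using d by (auto simp: inj_def)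
  then have "infinite (range (\<lambda>k::nat. s + 2 * of_nat k * d))"
    using range_inj_infinite by blast
  moreover have "e \<noteq> (0, 0)" using e by auto
  ultimately have "curve f = line_through A (snd e) (- fst e)"
    using curve_eq_line_through[OF irr] progression by blast
  moreover have "(snd e, - fst e) \<noteq> (0, 0)" using \<open>e \<noteq> (0, 0)\<close> by (cases e) auto
  ultimately show False using not_line by blast
qed

lemma simple_component_if_fibers_singleton:
  assumes q: "q \<in> conchoid f A d" and Z: "zariski_closed2 Z" "q \<notin> Z"
    and singleton: "\<And>Q. Q \<in> conchoid f A d \<Longrightarrow> Q \<notin> Z \<Longrightarrow>
      card (pi2 ` (pi1 -` {Q} \<inter> conchoid_B f A d)) = 1"
  shows "\<exists>M. simple_component f A d M"
proof -
  have "zariski_closed2 (conchoid f A d)"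
    unfolding conchoid_def by (rule zariski_closed2_closure)
  then obtain M where M: "irreducible_component2 M (conchoid f A d)" "q \<in> M"
    using q by (rule exists_irreducible_component2)
  then have irr: "zariski_irreducible2 M" and sub: "M \<subseteq> conchoid f A d"
    unfolding irreducible_component2_def by blast+
  have "\<not> M \<subseteq> Z" using M(2) Z(2) by blast
  then have "zariski_closure2 (M - Z) = M"
    by (rule zariski_closure2_irreducible_Diff[OF irr Z(1)])
  moreover have "M - Z \<noteq> {}" using M(2) Z(2) by blast
  moreover have "\<forall>Q\<in>M - Z. card (pi2 ` (pi1 -` {Q} \<inter> conchoid_B f A d)) = 1"
    using sub singleton by blast
  ultimately have "simple_component f A d M"
    unfolding simple_component_def using M(1) by (intro conjI exI[of _ "M - Z"]) blast+
  then show ?thesis ..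
qed

lemma conchoid_subset_discriminant_zeros:
  fixes A :: "'a::field \<times> 'a"
  assumes ab: "a \<in> poly_fun2" "b \<in> poly_fun2"
    and key: "\<And>Q c. c^2 * sqdist A Q = d^2 \<Longrightarrow>
      sqdist A Q ^ k * eval2 f (towards A Q c) = a Q + c * b Q"
  shows "conchoid f A d \<subseteq> {Q. sqdist A Q * (sqdist A Q * a Q^2 - d^2 * b Q^2) = 0}"
  unfolding conchoid_def
proof (rule zariski_closure2_minimal)
  show "zariski_closed2 {Q. sqdist A Q * (sqdist A Q * a Q^2 - d^2 * b Q^2) = 0}"
    using ab by (intro zariski_closed2_zero_set poly_fun2_mult poly_fun2_diff poly_fun2_power
        poly_fun2_sqdist poly_fun2_const)
  show "pi1 ` conchoid_B f A d \<subseteq> {Q. sqdist A Q * (sqdist A Q * a Q^2 - d^2 * b Q^2) = 0}"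
  proof
    fix Q assume "Q \<in> pi1 ` conchoid_B f A d"
    then obtain y w where B: "(Q, y, w) \<in> conchoid_B f A d" unfolding pi1_def by force
    show "Q \<in> {Q. sqdist A Q * (sqdist A Q * a Q^2 - d^2 * b Q^2) = 0}"
    proof (cases "sqdist A Q = 0")
      case False
      obtain c where c: "c^2 * sqdist A Q = d^2" "y = towards A Q c" "eval2 f y = 0"
        using B False by (rule conchoid_B_imp_towards)
      then have "a Q + c * b Q = 0" using key[OF c(1)] by simp
      moreover have "sqdist A Q * a Q^2 - d^2 * b Q^2
          = sqdist A Q * ((a Q - c * b Q) * (a Q + c * b Q))"
        using c(1) by (simp add: power2_eq_square algebra_simps)
      ultimately show ?thesis by simp
    qed simp
  qed
qed

lemma card_conchoid_fiber_eq_1: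
  fixes A :: "'a::{alg_closed_field, field_char_0} \<times> 'a"
  assumes key: "\<And>c. c^2 * sqdist A Q = d^2 \<Longrightarrow> sqdist A Q ^ k * eval2 f (towards A Q c) = a + c * b"
    and Q: "sqdist A Q \<noteq> 0" "sqdist A Q \<noteq> d^2" and a: "a \<noteq> 0"
    and disc: "sqdist A Q * a^2 = d^2 * b^2"
  shows "card (pi2 ` (pi1 -` {Q} \<inter> conchoid_B f A d)) = 1"
proof -
  obtain c0 where "c0^2 = d^2 / sqdist A Q" using nth_root_exists[of 2 "d^2 / sqdist A Q"] by auto
  then have c0: "c0^2 * sqdist A Q = d^2" using Q(1) by simp
  then have "sqdist A Q * ((a + c0 * b) * (a + (- c0) * b)) = 0"
    using disc by (simp add: power2_eq_square algebra_simps)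
  then have "a + c0 * b = 0 \<or> a + (- c0) * b = 0" using Q(1) by simp
  then obtain c where c: "c^2 * sqdist A Q = d^2" "a + c * b = 0"
  proof (elim disjE)
    assume "a + (- c0) * b = 0"
    then show thesis using c0 that[of "- c0"] by simp
  qed (use c0 that in blast)
  have "eval2 f (towards A Q c) = 0" using key[OF c(1)] c(2) Q(1) by simp
  moreover have "eval2 f (towards A Q (- c)) \<noteq> 0"
  proof -
    have "sqdist A Q ^ k * eval2 f (towards A Q (- c)) = a - c * b"
      using key[of "- c"] c(1) by simp
    also have "\<dots> = 2 * a" using c(2) by (simp add: add_eq_0_iff2)
    finally show ?thesis using a by auto
  qed
  ultimately show ?thesis
    using conchoid_fiber_eq_singleton[OF c(1) Q(2)] by simp
qed

theorem theorem3:
  fixes f :: "'a::{alg_closed_field, field_char_0} poly poly"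
    and A :: "'a \<times> 'a" and d :: 'a
  assumes "irreducible f"
    and "d \<noteq> 0"
    and "curve0 f A \<noteq> {}"
    and "\<forall>r. curve f \<noteq> circle_centered A r"
    and "\<forall>\<alpha> \<beta>. (\<alpha>, \<beta>) \<noteq> (0, 0) \<longrightarrow> curve f \<noteq> line_through A \<alpha> \<beta>"
  shows "\<exists>M. simple_component f A d M"
proof -
  obtain k a b where ab: "a \<in> poly_fun2" "b \<in> poly_fun2" and key:
    "\<And>Q c. c^2 * sqdist A Q = d^2 \<Longrightarrow> sqdist A Q ^ k * eval2 f (towards A Q c) = a Q + c * b Q"
    using linear_in_root_eval2_towards[of A "d^2" f] by (elim linear_in_rootE) blast
  obtain q c where q: "sqdist A q \<noteq> d^2" "c^2 * sqdist A q = d^2"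
    "eval2 f (towards A q c) = 0" "eval2 f (towards A q (- c)) \<noteq> 0"
    using exists_point_with_one_foot_on_curve[OF assms(1-3,5)] .
  have q0: "sqdist A q \<noteq> 0" using q(2) assms(2) by auto
  have "a q + c * b q = 0" "a q + (- c) * b q \<noteq> 0"
    using key[OF q(2)] key[of "- c" q] q(2-4) q0 by auto
  then have aq: "a q \<noteq> 0" by auto
  define Z where "Z = {Q. sqdist A Q * (sqdist A Q - d^2) * a Q = 0}"
  show ?thesis
  proof (rule simple_component_if_fibers_singleton)
    show "q \<in> conchoid f A d" by (rule mem_conchoid_if_foot_on_curve[OF q(2,1,3)])
    show "zariski_closed2 Z" unfolding Z_def using ab(1)
      by (intro zariski_closed2_zero_set poly_fun2_mult poly_fun2_diff poly_fun2_sqdist poly_fun2_const)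
    show "q \<notin> Z" unfolding Z_def using q0 q(1) aq by simp
    fix Q assume "Q \<in> conchoid f A d" "Q \<notin> Z"
    then have "sqdist A Q * (sqdist A Q * a Q^2 - d^2 * b Q^2) = 0"
      "sqdist A Q \<noteq> 0" "sqdist A Q \<noteq> d^2" "a Q \<noteq> 0"
      using conchoid_subset_discriminant_zeros[OF ab key] unfolding Z_def by auto
    then show "card (pi2 ` (pi1 -` {Q} \<inter> conchoid_B f A d)) = 1"
      by (intro card_conchoid_fiber_eq_1[OF key]) simp_all
  qed
qed

end
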